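(* Assume $\operatorname{add}(\mathcal N)=\operatorname{cov}(\mathcal N)$. Then $\mathcal{ANM}_{\operatorname{add}(\mathcal N)}\setminus\mathcal{ND}_{\operatorname{add}(\mathcal N)}$ is strongly $\mathfrak c$-algebrable in $\left(\mathbb R^{[0,1]}\right)^{\operatorname{add}(\mathcal N)}$.
   Context: For a regular infinite cardinal $\kappa$, a $\kappa$-sequence $(x_\alpha)_{\alpha<\kappa}$ converges to $x$ if for every neighbourhood $U$ of $x$ there is $\alpha_0<\kappa$ with $x_\alpha\in U$ for all $\alpha_0<\alpha<\kappa$; $\left(\mathbb R^{[0,1]}\right)^{\kappa}$ is the commutative real algebra of $\kappa$-sequences of functions $[0,1]\to\mathbb R$ with indexwise operations. $\lambda$ is Lebesgue measure, $\mathcal N$ the null subsets of $[0,1]$; $\operatorname{add}(\mathcal N)$ the least cardinality of a family of null sets with non-null union, $\operatorname{cov}(\mathcal N)$ the least cardinality of a family of null sets covering $[0,1]$. $\mathcal{ANM}_{\kappa}$: $\kappa$-sequences of Lebesgue measurable $f_\alpha:[0,1]\to\mathbb R$ converging a.e. to a measurable $f$ but not converging in measure to $f$. $\mathcal{ND}_{\kappa}$: $\kappa$-sequences of Lebesgue measurable $f_\alpha:[0,1]\to\mathbb R$ dominated a.e. by a common integrable $g$, converging a.e. to an integrable $f$, with $\int|f_\alpha-f|\,d\lambda\not\to0$. $S$ is strongly $\mu$-algebrable if there is a set $X$ of $\mu$ algebraically independent elements such that every nonzero element of the (non-unital) algebra generated by $X$ belongs to $S$. *)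

theory Defs
  imports "HOL-Analysis.Analysis" "HOL-Library.Equipollence"
begin

definition nullI :: "real set set" where
  "nullI = {A. A \<subseteq> {0..1} \<and> A \<in> null_sets lebesgue}"

definition card_is_addN :: "'i set \<Rightarrow> bool" where
  "card_is_addN I \<longleftrightarrow>
     (\<exists>F. F \<subseteq> nullI \<and> \<Union>F \<notin> nullI \<and> F \<approx> I) \<and>
     (\<forall>F. F \<subseteq> nullI \<and> \<Union>F \<notin> nullI \<longrightarrow> I \<lesssim> F)"

definition card_is_covN :: "'i set \<Rightarrow> bool" where
  "card_is_covN I \<longleftrightarrow>
     (\<exists>F. F \<subseteq> nullI \<and> {0..1} \<subseteq> \<Union>F \<and> F \<approx> I) \<and>
     (\<forall>F. F \<subseteq> nullI \<and> {0..1} \<subseteq> \<Union>F \<longrightarrow> I \<lesssim> F)"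

text \<open>A kappa-sequence is indexed by the field of a cardinal well-order r
  (the initial ordinal kappa); x converges to l along r.\<close>
definition kconv :: "'i rel \<Rightarrow> ('i \<Rightarrow> 'b::topological_space) \<Rightarrow> 'b \<Rightarrow> bool" where
  "kconv r x l \<longleftrightarrow>
     (\<forall>U. open U \<and> l \<in> U \<longrightarrow> (\<exists>\<alpha>0. \<forall>\<alpha>. (\<alpha>0, \<alpha>) \<in> r \<and> \<alpha> \<noteq> \<alpha>0 \<longrightarrow> x \<alpha> \<in> U))"

abbreviation I01 :: "real measure" where
  "I01 \<equiv> lebesgue_on {0..1}"

definition conv_in_measure :: "'i rel \<Rightarrow> ('i \<Rightarrow> real \<Rightarrow> real) \<Rightarrow> (real \<Rightarrow> real) \<Rightarrow> bool" where
  "conv_in_measure r F f \<longleftrightarrow>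
     (\<forall>\<epsilon>>0. kconv r (\<lambda>\<alpha>. measure I01 {t \<in> {0..1}. \<epsilon> \<le> \<bar>F \<alpha> t - f t\<bar>}) 0)"

definition ANM :: "'i rel \<Rightarrow> ('i \<Rightarrow> real \<Rightarrow> real) set" where
  "ANM r = {F. (\<forall>\<alpha>. F \<alpha> \<in> borel_measurable I01) \<and>
      (\<exists>f. f \<in> borel_measurable I01 \<and>
           (AE t in I01. kconv r (\<lambda>\<alpha>. F \<alpha> t) (f t)) \<and>
           \<not> conv_in_measure r F f)}"

definition ND :: "'i rel \<Rightarrow> ('i \<Rightarrow> real \<Rightarrow> real) set" where
  "ND r = {F. (\<forall>\<alpha>. F \<alpha> \<in> borel_measurable I01) \<and>
      (\<exists>g. integrable I01 g \<and> (\<forall>\<alpha>. AE t in I01. \<bar>F \<alpha> t\<bar> \<le> g t)) \<and>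
      (\<exists>f. integrable I01 f \<and>
           (AE t in I01. kconv r (\<lambda>\<alpha>. F \<alpha> t) (f t)) \<and>
           \<not> kconv r (\<lambda>\<alpha>. integral\<^sup>L I01 (\<lambda>t. \<bar>F \<alpha> t - f t\<bar>)) 0)}"

text \<open>Elements of (R^[0,1])^kappa: kappa-sequences of functions, represented as
  functions on the reals vanishing outside [0,1] (an isomorphic copy; the
  operations are indexwise and pointwise).\<close>
definition seq_algebra :: "('i \<Rightarrow> real \<Rightarrow> real) set" where
  "seq_algebra = {F. \<forall>\<alpha> t. t \<notin> {0..1} \<longrightarrow> F \<alpha> t = 0}"

definition mono_exps :: "nat \<Rightarrow> (nat \<Rightarrow> nat) set" where
  "mono_exps n = {e. (\<forall>i. n \<le> i \<longrightarrow> e i = 0) \<and> (\<exists>i<n. 0 < e i)}"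

definition poly_eval :: "(nat \<Rightarrow> nat) set \<Rightarrow> ((nat \<Rightarrow> nat) \<Rightarrow> real) \<Rightarrow> nat
     \<Rightarrow> (nat \<Rightarrow> 'i \<Rightarrow> real \<Rightarrow> real) \<Rightarrow> 'i \<Rightarrow> real \<Rightarrow> real" where
  "poly_eval E c n x = (\<lambda>\<alpha> t. \<Sum>e\<in>E. c e * (\<Prod>i<n. x i \<alpha> t ^ e i))"

definition alg_indep :: "('i \<Rightarrow> real \<Rightarrow> real) set \<Rightarrow> bool" where
  "alg_indep X \<longleftrightarrow>
     (\<forall>n x E c. (\<forall>i<n. x i \<in> X) \<and> inj_on x {..<n} \<and> finite E \<and> E \<noteq> {} \<and>
        E \<subseteq> mono_exps n \<and> (\<forall>e\<in>E. c e \<noteq> 0)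
        \<longrightarrow> poly_eval E c n x \<noteq> (\<lambda>\<alpha> t. 0))"

text \<open>The (non-unital) real algebra generated by X.\<close>
definition gen_alg :: "('i \<Rightarrow> real \<Rightarrow> real) set \<Rightarrow> ('i \<Rightarrow> real \<Rightarrow> real) set" where
  "gen_alg X = {poly_eval E c n x | n x E c.
      (\<forall>i<n. x i \<in> X) \<and> finite E \<and> E \<subseteq> mono_exps n}"

text \<open>S is strongly mu-algebrable (mu = cardinality of the set M) in the algebra A.\<close>
definition strongly_algebrable ::
    "('i \<Rightarrow> real \<Rightarrow> real) set \<Rightarrow> 'm set \<Rightarrow> ('i \<Rightarrow> real \<Rightarrow> real) set \<Rightarrow> bool" where
  "strongly_algebrable A M S \<longleftrightarrow>
     (\<exists>X. X \<subseteq> A \<and> X \<approx> M \<and> alg_indep X \<and>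
          (\<forall>y\<in>gen_alg X. y \<noteq> (\<lambda>\<alpha> t. 0) \<longrightarrow> y \<in> S))"

end

theory Submission
  imports Defs "HOL-Computational_Algebra.Fundamental_Theorem_Algebra"
begin

text \<open>Let \<open>\<kappa> = add(\<N>) = cov(\<N>)\<close>. Index a cover of \<open>[0,1]\<close> by null sets by \<open>\<kappa>\<close>
  and let \<open>A\<^sub>\<alpha>\<close> be the union of its members with index \<open>\<le> \<alpha>\<close>: each \<open>A\<^sub>\<alpha>\<close> is null, and
  each point of \<open>[0,1]\<close> lies in \<open>A\<^sub>\<alpha>\<close> for all large \<open>\<alpha>\<close>. Fix \<open>\<phi> : \<kappa> \<rightarrow> \<nat>\<^sup>4\<close> all of
  whose fibres are cofinal in \<open>\<kappa>\<close>. The \<open>\<alpha>\<close>-th term of the generator indexed by \<open>s \<in> \<real>\<close>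
  vanishes on \<open>A\<^sub>\<alpha>\<close> and equals the constant \<open>l * N ^ D ^ \<lfloor>m * exp s\<rfloor>\<close>, where
  \<open>(l, N, m, D) = \<phi> \<alpha>\<close>, on the rest of \<open>[0,1]\<close>.

  A polynomial without constant term in generators again has terms that are constant off
  \<open>A\<^sub>\<alpha>\<close>, so it converges to \<open>0\<close> at every point of \<open>[0,1]\<close>. If it is nonzero, some
  parameter gives a nonzero constant; replacing \<open>l\<close> by \<open>k * l\<close> multiplies a monomial of
  degree \<open>d\<close> by \<open>k ^ d\<close>, and since the fibres of \<open>\<phi>\<close> are cofinal, the constants are
  unbounded along every tail. So the sequence neither converges in measure nor is dominated
  by an integrable function. The generators are algebraically independent: for suitable \<open>m\<close>
  the exponents \<open>\<lfloor>m * exp s\<^sub>i\<rfloor>\<close> are distinct, and for \<open>D\<close> beyond all exponents of the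
  polynomial distinct monomials become distinct powers of \<open>N\<close>.\<close>

unbundle cardinal_syntax

section \<open>Cardinal arithmetic under \<open>add(\<N>) = cov(\<N>)\<close>\<close>

lemma card_order_UNIV_not_lepoll_under:
  fixes r :: "'i rel"
  assumes "card_order r" and "infinite (UNIV :: 'i set)"
  shows "\<not> (UNIV :: 'i set) \<lesssim> under r a"
proof
  assume "(UNIV :: 'i set) \<lesssim> under r a"
  have Field: "Field r = UNIV" and Card: "Card_order r"
    using card_order_on_Card_order[OF assms(1)] by auto
  have "under r a \<subseteq> insert a (underS r a)"
    by (auto simp: under_def underS_def)
  with \<open>UNIV \<lesssim> under r a\<close> have "(UNIV :: 'i set) \<lesssim> insert a (underS r a)"
    by (meson lepoll_trans subset_imp_lepoll)
  hence "(UNIV :: 'i set) \<lesssim> underS r a"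
    using assms(2) by (meson finite_insert infinite_insert_lepoll infinite_le_lepoll lepoll_trans)
  hence "|UNIV :: 'i set| \<le>o |underS r a|"
    unfolding lepoll_def card_of_ordLeq[symmetric] by blast
  moreover have "|underS r a| <o r" using card_of_underS[OF Card] Field by simp
  moreover have "r =o |UNIV :: 'i set|" using card_of_unique[OF assms(1)] .
  ultimately have "|UNIV :: 'i set| <o |UNIV :: 'i set|"
    using ordLeq_ordLess_trans ordLess_ordIso_trans by blast
  thus False using ordLess_irreflexive by blast
qed

text \<open>A map from \<open>\<kappa> \<times> Q\<close> onto \<open>\<kappa>\<close>, followed by the projection to \<open>Q\<close>,
  has fibres of size \<open>\<kappa>\<close>, which no initial segment of \<open>\<kappa>\<close> can contain.\<close>
lemma card_order_cofinal_fibres: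
  fixes r :: "'i rel"
  assumes "card_order r" and inf: "infinite (UNIV :: 'i set)"
    and small: "(UNIV :: 'q set) \<lesssim> (UNIV :: 'i set)"
  obtains \<phi> :: "'i \<Rightarrow> 'q" where "\<And>q b. \<exists>a. (b, a) \<in> r \<and> a \<noteq> b \<and> \<phi> a = q"
proof -
  have "|UNIV :: 'q set| \<le>o |UNIV :: 'i set|"
    using small unfolding lepoll_def card_of_ordLeq[symmetric] by blast
  hence "|(UNIV :: 'i set) \<times> (UNIV :: 'q set)| =o |UNIV :: 'i set|"
    using card_of_Times_infinite[OF inf UNIV_not_empty] by blast
  hence "(UNIV :: 'i set) \<times> (UNIV :: 'q set) \<approx> (UNIV :: 'i set)"
    by (simp add: eqpoll_iff_card_of_ordIso)
  then obtain h :: "'i \<times> 'q \<Rightarrow> 'i" where h: "bij h"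
    unfolding eqpoll_def by auto
  have refl: "(a, a) \<in> r" and total: "a \<noteq> b \<Longrightarrow> (a, b) \<in> r \<or> (b, a) \<in> r" for a b
    using card_order_on_well_order_on[OF assms(1)]
    unfolding well_order_on_def linear_order_on_def partial_order_on_def preorder_on_def
      refl_on_def total_on_def by auto
  have "\<exists>a. (b, a) \<in> r \<and> a \<noteq> b \<and> snd (inv h a) = q" for q b
  proof (rule ccontr)
    assume none: "\<not> ?thesis"
    have "h (c, q) \<in> under r b" for c
    proof -
      have fibre: "snd (inv h (h (c, q))) = q" using h by (simp add: bij_def)
      show ?thesis
      proof (cases "h (c, q) = b")
        case False
        with none fibre have "(b, h (c, q)) \<notin> r" by blast
        with total[OF False] show ?thesis by (simp add: under_def)
      qed (simp add: under_def refl)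
    qed
    hence "range (\<lambda>c. h (c, q)) \<subseteq> under r b" by blast
    moreover have "inj (\<lambda>c. h (c, q))"
      using h by (auto simp: bij_def inj_def)
    ultimately have "(UNIV :: 'i set) \<lesssim> under r b"
      unfolding lepoll_def by blast
    thus False using card_order_UNIV_not_lepoll_under[OF assms(1) inf] by blast
  qed
  thus thesis by (rule that)
qed

lemma card_is_addN_infinite:
  assumes "card_is_addN (UNIV :: 'i set)"
  shows "infinite (UNIV :: 'i set)"
proof
  assume fin: "finite (UNIV :: 'i set)"
  obtain F where F: "F \<subseteq> nullI" "\<Union>F \<notin> nullI" "F \<approx> (UNIV :: 'i set)"
    using assms unfolding card_is_addN_def by blast
  have "finite F" using eqpoll_finite_iff[OF F(3)] fin by simp
  moreover have "F \<subseteq> null_sets lebesgue" using F(1) by (auto simp: nullI_def)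
  ultimately have "\<Union>F \<in> null_sets lebesgue" by (rule null_sets.finite_Union)
  with F(1,2) show False by (auto simp: nullI_def)
qed

text \<open>Index a covering family of size \<open>cov(\<N>)\<close> by \<open>\<kappa>\<close> and take unions of initial
  segments: they are null because \<open>\<kappa> = add(\<N>)\<close>, and every point lies in all of them
  from some index on.\<close>
lemma addN_covN_null_exhaustion:
  fixes r :: "'i rel"
  assumes "card_order r" "card_is_addN (UNIV :: 'i set)" "card_is_covN (UNIV :: 'i set)"
  obtains A :: "'i \<Rightarrow> real set"
  where "\<And>a. A a \<in> null_sets lebesgue"
    and "\<And>t. t \<in> {0..1} \<Longrightarrow> \<exists>b. \<forall>a. (b, a) \<in> r \<longrightarrow> t \<in> A a"
proof -
  have inf: "infinite (UNIV :: 'i set)" using card_is_addN_infinite[OF assms(2)] .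
  obtain F where F: "F \<subseteq> nullI" "{0..1} \<subseteq> \<Union>F" "F \<approx> (UNIV :: 'i set)"
    using assms(3) unfolding card_is_covN_def by blast
  obtain N where N: "bij_betw N (UNIV :: 'i set) F"
    using eqpoll_sym[OF F(3)] unfolding eqpoll_def by blast
  define A where "A a = \<Union> (N ` under r a)" for a
  have "A a \<in> nullI" for a
  proof (rule ccontr)
    assume "A a \<notin> nullI"
    moreover have "N ` under r a \<subseteq> nullI" using N F(1) by (auto simp: bij_betw_def)
    ultimately have "(UNIV :: 'i set) \<lesssim> N ` under r a"
      using assms(2) unfolding card_is_addN_def A_def by blast
    also have "N ` under r a \<lesssim> under r a" by (rule image_lepoll)
    finally show False using card_order_UNIV_not_lepoll_under[OF assms(1) inf] by blast
  qed
  moreover have "\<exists>b. \<forall>a. (b, a) \<in> r \<longrightarrow> t \<in> A a" if t: "t \<in> {0..1}" for t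
  proof -
    obtain S where "S \<in> F" "t \<in> S" using F(2) t by blast
    moreover obtain b where "N b = S" using N \<open>S \<in> F\<close> by (metis bij_betw_inv_into_right)
    ultimately have "t \<in> N b" by simp
    thus ?thesis by (auto simp: A_def under_def)
  qed
  ultimately show thesis using that[of A] by (simp add: nullI_def)
qed

section \<open>Polynomials without constant term\<close>

definition mpoly_eval ::
    "(nat \<Rightarrow> nat) set \<Rightarrow> ((nat \<Rightarrow> nat) \<Rightarrow> real) \<Rightarrow> nat \<Rightarrow> (nat \<Rightarrow> real) \<Rightarrow> real" where "mpoly_eval E c n v = (\<Sum>e\<in>E. c e * (\<Prod>i<n. v i ^ e i))"

lemma poly_eval_eq_mpoly_eval: "poly_eval E c n x \<alpha> t = mpoly_eval E c n (\<lambda>i. x i \<alpha> t)"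
  by (simp add: poly_eval_def mpoly_eval_def)

lemma poly_eval_cong: "(\<And>i. i < n \<Longrightarrow> x i = y i) \<Longrightarrow> poly_eval E c n x = poly_eval E c n y"
  unfolding poly_eval_def by (intro ext sum.cong prod.cong) auto

lemma mpoly_eval_zero:
  assumes "E \<subseteq> mono_exps n"
  shows "mpoly_eval E c n (\<lambda>i. 0) = 0"
proof -
  have vanish: "(\<Prod>i<n. (0::real) ^ e i) = 0" if e: "e \<in> E" for e
  proof -
    obtain i where "i < n" "0 < e i" using assms e unfolding mono_exps_def by blast
    thus ?thesis by (intro prod_zero) auto
  qed
  show ?thesis unfolding mpoly_eval_def
    by (intro sum.neutral ballI) (simp only: vanish mult_zero_right)
qed

lemma poly_unbounded_at_nat:
  fixes p :: "real poly"
  assumes "0 < degree p"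
  shows "\<exists>k::nat. M < \<bar>poly p (real k)\<bar>"
proof -
  obtain a q where p: "p = pCons a q" by (cases p)
  with assms have "q \<noteq> 0" by auto
  then obtain R where R: "\<And>z::real. R \<le> norm z \<Longrightarrow> M + 1 \<le> norm (poly p z)"
    using poly_infinity[of q "M + 1" a] p by blast
  have "R \<le> norm (real (nat \<lceil>\<bar>R\<bar>\<rceil>))" by (simp; linarith)
  hence "M + 1 \<le> \<bar>poly p (real (nat \<lceil>\<bar>R\<bar>\<rceil>))\<bar>" using R by simp
  thus ?thesis by (intro exI[of _ "nat \<lceil>\<bar>R\<bar>\<rceil>"]) simp
qed

text \<open>Scaling all variables by \<open>k\<close> turns a polynomial without constant term into a
  univariate polynomial in \<open>k\<close> with zero constant coefficient.\<close>
lemma mpoly_eval_scaled_unbounded: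
  assumes E: "E \<subseteq> mono_exps n" and nz: "mpoly_eval E c n v \<noteq> 0"
  shows "\<exists>k::nat. M < \<bar>mpoly_eval E c n (\<lambda>i. real k * v i)\<bar>"
proof -
  define p where "p = (\<Sum>e\<in>E. monom (c e * (\<Prod>i<n. v i ^ e i)) (\<Sum>i<n. e i))"
  have scaled: "mpoly_eval E c n (\<lambda>i. x * v i) = poly p x" for x
    by (simp add: mpoly_eval_def p_def poly_sum poly_monom power_mult_distrib prod.distrib
        power_sum ac_simps)
  have "coeff p 0 = 0"
  proof -
    have positive_degree: "(\<Sum>i<n. e i) \<noteq> 0" if "e \<in> E" for e
      using E that by (auto simp: mono_exps_def)
    show ?thesis unfolding p_def coeff_sum coeff_monom
      by (intro sum.neutral ballI) (simp only: positive_degree if_False)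
  qed
  moreover have "poly p 1 \<noteq> 0" using nz scaled[of 1] by simp
  ultimately have "0 < degree p"
    by (metis degree_0_id gr0I poly_const_conv)
  thus ?thesis using poly_unbounded_at_nat[of p M] by (simp add: scaled)
qed

lemma base_expansion_unique:
  fixes D :: nat
  assumes "\<forall>p<M. a p < D \<and> b p < D" and "(\<Sum>p<M. a p * D ^ p) = (\<Sum>p<M. b p * D ^ p)"
  shows "\<forall>p<M. a p = b p"
  using assms
proof (induction M arbitrary: a b)
  case 0
  then show ?case by simp
next
  case (Suc M)
  have split: "(\<Sum>p<Suc M. f p * D ^ p) = f 0 + D * (\<Sum>p<M. f (Suc p) * D ^ p)" for f
    unfolding sum.lessThan_Suc_shift by (simp add: sum_distrib_left ac_simps)
  have eq: "a 0 + D * (\<Sum>p<M. a (Suc p) * D ^ p) = b 0 + D * (\<Sum>p<M. b (Suc p) * D ^ p)"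
    using Suc.prems(2) unfolding split .
  have "a 0 < D" "b 0 < D" using Suc.prems(1) by auto
  hence "a 0 = b 0" and "(\<Sum>p<M. a (Suc p) * D ^ p) = (\<Sum>p<M. b (Suc p) * D ^ p)"
    using arg_cong[OF eq, of "\<lambda>x. x mod D"] arg_cong[OF eq, of "\<lambda>x. x div D"] by simp_all
  with Suc.IH[of "\<lambda>p. a (Suc p)" "\<lambda>p. b (Suc p)"] Suc.prems(1) show ?case
    by (auto simp: less_Suc_eq_0_disj)
qed

text \<open>Monomials become distinct powers of a single variable under the substitution
  \<open>x\<^sub>i \<mapsto> x ^ D ^ j i\<close> with distinct \<open>j i\<close>: the exponent of the image of \<open>x ^ e\<close> has
  the digits \<open>e i\<close> in base \<open>D\<close>.\<close>
lemma inj_on_sum_mult_power: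
  fixes j :: "nat \<Rightarrow> nat" and D :: nat
  assumes j: "inj_on j {..<n}" and support: "\<forall>e\<in>E. \<forall>i\<ge>n. e i = 0"
    and digits: "\<forall>e\<in>E. \<forall>i<n. e i < D" and "0 < D"
  shows "inj_on (\<lambda>e. \<Sum>i<n. e i * D ^ j i) E"
proof
  fix e e' assume e: "e \<in> E" and e': "e' \<in> E"
    and eq: "(\<Sum>i<n. e i * D ^ j i) = (\<Sum>i<n. e' i * D ^ j i)"
  define M where "M = Suc (\<Sum>i<n. j i)"
  have M: "j i < M" if "i < n" for i
    unfolding M_def using that by (intro le_imp_less_Suc member_le_sum) auto
  define digit where
    "digit e p = (if p \<in> j ` {..<n} then e (the_inv_into {..<n} j p) else 0)" for e :: "nat \<Rightarrow> nat" and p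
  have digit_j: "digit e (j i) = e i" if "i < n" for e i
    using that by (simp add: digit_def the_inv_into_f_f[OF j])
  have expansion: "(\<Sum>i<n. e i * D ^ j i) = (\<Sum>p<M. digit e p * D ^ p)" for e
  proof -
    have "(\<Sum>p<M. digit e p * D ^ p) = (\<Sum>p\<in>j ` {..<n}. digit e p * D ^ p)"
      by (rule sum.mono_neutral_right) (auto simp: M digit_def)
    also have "\<dots> = (\<Sum>i<n. e i * D ^ j i)"
      by (simp add: sum.reindex[OF j] digit_j)
    finally show ?thesis by simp
  qed
  have "\<forall>p<M. digit e p < D \<and> digit e' p < D"
    using digits e e' \<open>0 < D\<close> by (auto simp: digit_def the_inv_into_f_f[OF j])
  hence same_digits: "\<forall>p<M. digit e p = digit e' p"
    using eq by (intro base_expansion_unique) (simp_all add: expansion)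
  show "e = e'"
  proof
    fix i
    show "e i = e' i"
    proof (cases "i < n")
      case True
      thus ?thesis using same_digits M digit_j by metis
    next
      case False
      thus ?thesis using support e e' by (metis not_less)
    qed
  qed
qed

lemma mpoly_eval_nonzero_at_powers:
  fixes j :: "nat \<Rightarrow> nat" and D :: nat
  assumes j: "inj_on j {..<n}" and E: "finite E" "E \<noteq> {}" "E \<subseteq> mono_exps n"
    and c: "\<forall>e\<in>E. c e \<noteq> 0" and digits: "\<forall>e\<in>E. \<forall>i<n. e i < D"
  shows "\<exists>N::nat. mpoly_eval E c n (\<lambda>i. real N ^ (D ^ j i)) \<noteq> 0"
proof -
  obtain e0 where e0: "e0 \<in> E" using E(2) by blast
  then obtain i where "i < n" using E(3) by (auto simp: mono_exps_def)
  hence "0 < D" using digits e0 by fastforce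
  define code where "code e = (\<Sum>i<n. e i * D ^ j i)" for e :: "nat \<Rightarrow> nat"
  have "inj_on code E"
    unfolding code_def using E(3) digits \<open>0 < D\<close>
    by (intro inj_on_sum_mult_power[OF j]) (auto simp: mono_exps_def)
  define p where "p = (\<Sum>e\<in>E. monom (c e) (code e))"
  have "coeff p (code e0) = (\<Sum>e\<in>E. if code e = code e0 then c e else 0)"
    by (simp add: p_def coeff_sum coeff_monom)
  also have "\<dots> = c e0"
    using \<open>inj_on code E\<close> e0 E(1) by (simp add: inj_on_eq_iff[of code E _ e0] sum.delta)
  finally have "p \<noteq> 0" using c e0 by auto
  hence "finite {x. poly p x = 0}" by (rule poly_roots_finite)
  moreover have "infinite (range (real :: nat \<Rightarrow> real))"
    using range_inj_infinite inj_of_nat by blast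
  ultimately obtain N :: nat where N: "poly p (real N) \<noteq> 0"
    by (metis (mono_tags, lifting) finite_subset image_subset_iff mem_Collect_eq)
  have "mpoly_eval E c n (\<lambda>i. real N ^ (D ^ j i)) = poly p (real N)"
    by (simp add: mpoly_eval_def p_def code_def poly_sum poly_monom power_sum
        power_mult[symmetric] mult.commute)
  with N show ?thesis by (intro exI[of _ N]) simp
qed

lemma ex_nat_floor_mult_inj_on:
  fixes u :: "'a \<Rightarrow> real"
  assumes "finite S" and u: "inj_on u S" and nonneg: "\<forall>i\<in>S. 0 \<le> u i"
  shows "\<exists>m::nat. inj_on (\<lambda>i. nat \<lfloor>real m * u i\<rfloor>) S"
proof -
  define m where "m = (\<Sum>(i, i')\<in>S \<times> S. nat \<lceil>1 / \<bar>u i - u i'\<bar>\<rceil> + 1)"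
  show ?thesis
  proof (intro exI[of _ m] inj_onI)
    fix i i' assume i: "i \<in> S" and i': "i' \<in> S"
      and eq: "nat \<lfloor>real m * u i\<rfloor> = nat \<lfloor>real m * u i'\<rfloor>"
    show "i = i'"
    proof (rule ccontr)
      assume "i \<noteq> i'"
      define d where "d = \<bar>u i - u i'\<bar>"
      have "0 < d" using u i i' \<open>i \<noteq> i'\<close> unfolding d_def by (auto dest: inj_onD)
      have "(case (i, i') of (i, i') \<Rightarrow> nat \<lceil>1 / \<bar>u i - u i'\<bar>\<rceil> + 1) \<le> m"
        unfolding m_def using \<open>finite S\<close> i i' by (intro member_le_sum) auto
      hence "real (nat \<lceil>1 / d\<rceil> + 1) \<le> real m" unfolding d_def by simp
      hence "1 / d + 1 \<le> real m" using real_nat_ceiling_ge[of "1 / d"] by simp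
      hence "(1 / d + 1) * d \<le> real m * d" using \<open>0 < d\<close> by (intro mult_right_mono) auto
      moreover have "(1 / d + 1) * d = 1 + d" using \<open>0 < d\<close> by (simp add: field_simps)
      ultimately have "1 < real m * d" using \<open>0 < d\<close> by linarith
      have "\<lfloor>real m * u i\<rfloor> = \<lfloor>real m * u i'\<rfloor>"
        using eq nonneg i i' by (simp add: eq_nat_nat_iff)
      hence "\<bar>real m * u i - real m * u i'\<bar> < 1" by linarith
      also have "\<bar>real m * u i - real m * u i'\<bar> = real m * d"
        unfolding d_def by (simp add: abs_mult right_diff_distrib[symmetric])
      finally show False using \<open>1 < real m * d\<close> by simp
    qed
  qed
qed

definition generator_value :: "nat \<times> nat \<times> nat \<times> nat \<Rightarrow> real \<Rightarrow> real" where
  "generator_value = (\<lambda>(l, N, m, D) s. real l * real N ^ (D ^ nat \<lfloor>real m * exp s\<rfloor>))"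

lemma mpoly_eval_generator_value_nonzero:
  assumes \<sigma>: "inj_on \<sigma> {..<n}" and E: "finite E" "E \<noteq> {}" "E \<subseteq> mono_exps n"
    and c: "\<forall>e\<in>E. c e \<noteq> 0"
  shows "\<exists>q. mpoly_eval E c n (\<lambda>i. generator_value q (\<sigma> i)) \<noteq> 0"
proof -
  have "inj_on (\<lambda>i. exp (\<sigma> i)) {..<n}" using \<sigma> by (auto simp: inj_on_def)
  then obtain m :: nat where m: "inj_on (\<lambda>i. nat \<lfloor>real m * exp (\<sigma> i)\<rfloor>) {..<n}"
    using ex_nat_floor_mult_inj_on[of "{..<n}" "\<lambda>i. exp (\<sigma> i)"] by auto
  define D where "D = Suc (\<Sum>e\<in>E. \<Sum>i<n. e i)"
  have "e i < D" if "e \<in> E" "i < n" for e i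
  proof -
    have "e i \<le> (\<Sum>i<n. e i)" using that by (intro member_le_sum) auto
    also have "\<dots> \<le> (\<Sum>e\<in>E. \<Sum>i<n. e i)" using that E(1) by (intro member_le_sum) auto
    finally show ?thesis unfolding D_def by simp
  qed
  then obtain N :: nat
    where "mpoly_eval E c n (\<lambda>i. real N ^ (D ^ nat \<lfloor>real m * exp (\<sigma> i)\<rfloor>)) \<noteq> 0"
    using mpoly_eval_nonzero_at_powers[OF m E c] by blast
  hence "mpoly_eval E c n (\<lambda>i. generator_value (1, N, m, D) (\<sigma> i)) \<noteq> 0"
    by (simp add: generator_value_def)
  thus ?thesis by blast
qed

lemma mpoly_eval_generator_value_unbounded:
  assumes "E \<subseteq> mono_exps n"
    and "mpoly_eval E c n (\<lambda>i. generator_value (l, N, m, D) (\<sigma> i)) \<noteq> 0"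
  shows "\<exists>k::nat. M < \<bar>mpoly_eval E c n (\<lambda>i. generator_value (k * l, N, m, D) (\<sigma> i))\<bar>"
proof -
  have "generator_value (k * l, N, m, D) s = real k * generator_value (l, N, m, D) s" for k s
    by (simp add: generator_value_def)
  thus ?thesis using mpoly_eval_scaled_unbounded[OF assms] by simp
qed

lemma generator_value_separates:
  assumes "s \<noteq> s'"
  shows "\<exists>q. generator_value q s \<noteq> generator_value q s'"
proof -
  have "inj_on exp {s, s'}" by (simp add: inj_on_def)
  then obtain m :: nat where "inj_on (\<lambda>s. nat \<lfloor>real m * exp s\<rfloor>) {s, s'}"
    using ex_nat_floor_mult_inj_on[of "{s, s'}" exp] by auto
  hence "nat \<lfloor>real m * exp s\<rfloor> \<noteq> nat \<lfloor>real m * exp s'\<rfloor>"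
    using assms by (auto dest: inj_onD)
  hence "generator_value (1, 2, m, 2) s \<noteq> generator_value (1, 2, m, 2) s'"
    by (simp add: generator_value_def power_inject_exp)
  thus ?thesis by blast
qed

section \<open>Sequences that are constant off null sets\<close>

lemma AE_I01_notin_null:
  fixes N :: "real set"
  assumes "N \<in> null_sets lebesgue"
  shows "AE t in I01. t \<notin> N"
proof -
  have "N \<inter> {0..1} \<in> null_sets lebesgue"
    by (rule null_sets_subset[OF assms]) (use assms in auto)
  moreover have "{0..1 :: real} \<in> sets lebesgue" by simp
  ultimately have "N \<inter> {0..1} \<in> null_sets I01"
    by (simp only: null_sets_restrict_space) blast
  from AE_not_in[OF this] show ?thesis by (rule lebesgue_on_mono) auto
qed

lemma measure_I01_diff_null:
  fixes N :: "real set"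
  assumes "N \<in> null_sets lebesgue"
  shows "measure I01 ({0..1} - N) = 1"
proof -
  have "measure I01 ({0..1} - N) = measure lebesgue ({0..1} - N)"
    by (rule measure_restrict_space) auto
  also have "\<dots> = 1" using measure_Diff_null_set[OF _ assms, of "{0..1}"] by simp
  finally show ?thesis .
qed

lemma unit_interval_diff_null_nonempty:
  fixes N :: "real set"
  assumes "N \<in> null_sets lebesgue"
  shows "{0..1} - N \<noteq> {}"
  using measure_I01_diff_null[OF assms] by (metis measure_empty zero_neq_one)

definition const_off_null :: "('i \<Rightarrow> real set) \<Rightarrow> ('i \<Rightarrow> real) \<Rightarrow> 'i \<Rightarrow> real \<Rightarrow> real" where
  "const_off_null A C a t = (if t \<in> {0..1} - A a then C a else 0)"

lemma const_off_null_measurable: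
  assumes "A a \<in> null_sets lebesgue"
  shows "const_off_null A C a \<in> borel_measurable I01"
proof -
  have "{0..1} - A a \<in> sets lebesgue" using assms by auto
  hence "({0..1} - A a) \<inter> space I01 \<in> sets I01"
    by (auto simp: sets_restrict_space_iff)
  thus ?thesis unfolding const_off_null_def by (intro measurable_If_set) auto
qed

lemma const_off_null_in_ANM:
  fixes r :: "'i rel"
  assumes null: "\<And>a. A a \<in> null_sets lebesgue"
    and exhaustion: "\<And>t. t \<in> {0..1} \<Longrightarrow> \<exists>b. \<forall>a. (b, a) \<in> r \<longrightarrow> t \<in> A a"
    and large: "\<And>b. \<exists>a. (b, a) \<in> r \<and> a \<noteq> b \<and> 1 \<le> \<bar>C a\<bar>"
  shows "const_off_null A C \<in> ANM r"
proof -
  let ?F = "const_off_null A C"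
  have "AE t in I01. kconv r (\<lambda>a. ?F a t) 0"
  proof (rule AE_I2)
    fix t assume "t \<in> space I01"
    then obtain b where "\<forall>a. (b, a) \<in> r \<longrightarrow> t \<in> A a" using exhaustion by auto
    thus "kconv r (\<lambda>a. ?F a t) 0"
      unfolding kconv_def const_off_null_def by auto
  qed
  moreover have "\<not> conv_in_measure r ?F (\<lambda>t. 0)"
  proof
    assume "conv_in_measure r ?F (\<lambda>t. 0)"
    hence "kconv r (\<lambda>a. measure I01 {t \<in> {0..1}. 1 \<le> \<bar>?F a t - 0\<bar>}) 0"
      unfolding conv_in_measure_def by simp
    moreover have "open {..<1::real}" "0 \<in> {..<1::real}" by auto
    ultimately obtain b where b: "\<forall>a. (b, a) \<in> r \<and> a \<noteq> b \<longrightarrow>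
        measure I01 {t \<in> {0..1}. 1 \<le> \<bar>?F a t - 0\<bar>} \<in> {..<1}"
      unfolding kconv_def by blast
    obtain a where a: "(b, a) \<in> r" "a \<noteq> b" "1 \<le> \<bar>C a\<bar>" using large by blast
    have "{t \<in> {0..1}. 1 \<le> \<bar>?F a t - 0\<bar>} = {0..1} - A a"
      using a(3) by (auto simp: const_off_null_def)
    moreover have "measure I01 {t \<in> {0..1}. 1 \<le> \<bar>?F a t - 0\<bar>} < 1"
      using b a(1,2) by blast
    ultimately show False using measure_I01_diff_null[OF null] by simp
  qed
  ultimately show ?thesis
    using const_off_null_measurable[of A, OF null] unfolding ANM_def
    by (auto intro!: exI[of _ "\<lambda>t. 0"])
qed

lemma const_off_null_notin_ND:
  assumes null: "\<And>a. A a \<in> null_sets lebesgue" and unbounded: "\<And>M. \<exists>a. M < \<bar>C a\<bar>"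
  shows "const_off_null A C \<notin> ND r"
proof
  assume "const_off_null A C \<in> ND r"
  then obtain g where g: "integrable I01 g"
    and dominated: "\<forall>a. AE t in I01. \<bar>const_off_null A C a t\<bar> \<le> g t"
    by (auto simp: ND_def)
  obtain a where a: "integral\<^sup>L I01 g < \<bar>C a\<bar>" using unbounded by blast
  have "AE t in I01. \<bar>C a\<bar> \<le> g t"
    using AE_conjI[OF dominated[rule_format, of a] AE_I01_notin_null[OF null, of a]]
    by (rule lebesgue_on_mono) (auto simp: const_off_null_def)
  hence "integral\<^sup>L I01 (\<lambda>t. \<bar>C a\<bar>) \<le> integral\<^sup>L I01 g"
    by (intro integral_mono_AE g) auto
  moreover have "integral\<^sup>L I01 (\<lambda>t. \<bar>C a\<bar>) = \<bar>C a\<bar>"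
    using measure_I01_diff_null[of "{}"] by simp
  ultimately show False using a by linarith
qed

section \<open>The generators\<close>

locale cofinal_null_exhaustion =
  fixes r :: "'i rel" and \<phi> :: "'i \<Rightarrow> nat \<times> nat \<times> nat \<times> nat" and A :: "'i \<Rightarrow> real set"
  assumes cofinal_fibres: "\<And>q b. \<exists>a. (b, a) \<in> r \<and> a \<noteq> b \<and> \<phi> a = q"
    and null: "\<And>a. A a \<in> null_sets lebesgue"
    and exhaustion: "\<And>t. t \<in> {0..1} \<Longrightarrow> \<exists>b. \<forall>a. (b, a) \<in> r \<longrightarrow> t \<in> A a"
begin

definition generator :: "real \<Rightarrow> 'i \<Rightarrow> real \<Rightarrow> real" where
  "generator s = const_off_null A (\<lambda>a. generator_value (\<phi> a) s)"

lemma poly_eval_generator: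
  assumes "E \<subseteq> mono_exps n"
  shows "poly_eval E c n (\<lambda>i. generator (\<sigma> i))
    = const_off_null A (\<lambda>a. mpoly_eval E c n (\<lambda>i. generator_value (\<phi> a) (\<sigma> i)))"
proof (intro ext)
  fix a t
  show "poly_eval E c n (\<lambda>i. generator (\<sigma> i)) a t
    = const_off_null A (\<lambda>a. mpoly_eval E c n (\<lambda>i. generator_value (\<phi> a) (\<sigma> i))) a t"
  proof (cases "t \<in> {0..1} - A a")
    case True
    thus ?thesis by (simp add: poly_eval_eq_mpoly_eval generator_def const_off_null_def)
  next
    case False
    hence "(\<lambda>i. generator (\<sigma> i) a t) = (\<lambda>i. 0)"
      by (auto simp: generator_def const_off_null_def)
    thus ?thesis using False mpoly_eval_zero[OF assms]
      by (auto simp: poly_eval_eq_mpoly_eval const_off_null_def)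
  qed
qed

lemma inj_generator: "inj generator"
proof
  fix s s' assume eq: "generator s = generator s'"
  show "s = s'"
  proof (rule ccontr)
    assume "s \<noteq> s'"
    then obtain q where q: "generator_value q s \<noteq> generator_value q s'"
      using generator_value_separates by blast
    obtain a where "\<phi> a = q" using cofinal_fibres by blast
    moreover obtain t where "t \<in> {0..1} - A a"
      using unit_interval_diff_null_nonempty[OF null] by blast
    ultimately have "generator s a t \<noteq> generator s' a t"
      using q by (simp add: generator_def const_off_null_def)
    with eq show False by simp
  qed
qed

lemma poly_eval_generator_nonzero:
  assumes "inj_on \<sigma> {..<n}" "finite E" "E \<noteq> {}" "E \<subseteq> mono_exps n" "\<forall>e\<in>E. c e \<noteq> 0"
  shows "poly_eval E c n (\<lambda>i. generator (\<sigma> i)) \<noteq> (\<lambda>a t. 0)"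
proof -
  obtain q where q: "mpoly_eval E c n (\<lambda>i. generator_value q (\<sigma> i)) \<noteq> 0"
    using mpoly_eval_generator_value_nonzero[OF assms] by blast
  obtain a where "\<phi> a = q" using cofinal_fibres by blast
  moreover obtain t where "t \<in> {0..1} - A a"
    using unit_interval_diff_null_nonempty[OF null] by blast
  ultimately have "poly_eval E c n (\<lambda>i. generator (\<sigma> i)) a t \<noteq> 0"
    using q by (simp add: poly_eval_generator[OF assms(4)] const_off_null_def)
  thus ?thesis by auto
qed

text \<open>A nonzero value of the polynomial at one parameter \<open>(l, N, m, D)\<close> becomes
  arbitrarily large at \<open>(k * l, N, m, D)\<close>, and every parameter recurs cofinally.\<close>
lemma poly_eval_generator_in_ANM_minus_ND:
  assumes E: "E \<subseteq> mono_exps n" and nz: "poly_eval E c n (\<lambda>i. generator (\<sigma> i)) \<noteq> (\<lambda>a t. 0)"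
  shows "poly_eval E c n (\<lambda>i. generator (\<sigma> i)) \<in> ANM r - ND r"
proof -
  define C where "C a = mpoly_eval E c n (\<lambda>i. generator_value (\<phi> a) (\<sigma> i))" for a
  have "C \<noteq> (\<lambda>a. 0)"
    using nz by (auto simp: poly_eval_generator[OF E] C_def const_off_null_def fun_eq_iff
        split: if_splits)
  then obtain a0 where "C a0 \<noteq> 0" by auto
  obtain l N m D where q0: "\<phi> a0 = (l, N, m, D)" by (cases "\<phi> a0") auto
  with \<open>C a0 \<noteq> 0\<close> have nz0: "mpoly_eval E c n (\<lambda>i. generator_value (l, N, m, D) (\<sigma> i)) \<noteq> 0"
    by (simp add: C_def)
  have large: "\<exists>a. (b, a) \<in> r \<and> a \<noteq> b \<and> M < \<bar>C a\<bar>" for M b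
  proof -
    obtain k :: nat where "M < \<bar>mpoly_eval E c n (\<lambda>i. generator_value (k * l, N, m, D) (\<sigma> i))\<bar>"
      using mpoly_eval_generator_value_unbounded[OF E nz0] by blast
    moreover obtain a where "(b, a) \<in> r" "a \<noteq> b" "\<phi> a = (k * l, N, m, D)"
      using cofinal_fibres by blast
    ultimately show ?thesis by (auto simp: C_def)
  qed
  have "const_off_null A C \<in> ANM r"
    using large[of _ 1] by (intro const_off_null_in_ANM null exhaustion) (auto intro: less_imp_le)
  moreover have "const_off_null A C \<notin> ND r"
    by (intro const_off_null_notin_ND null) (meson large)
  ultimately show ?thesis by (simp add: poly_eval_generator[OF E] C_def[abs_def])
qed

lemma poly_eval_range_generator:
  assumes "\<forall>i<n. x i \<in> range generator"
  shows "poly_eval E c n x = poly_eval E c n (\<lambda>i. generator (inv generator (x i)))"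
  using assms by (intro poly_eval_cong) (simp add: f_inv_into_f)

lemma strongly_algebrable_ANM_minus_ND:
  "strongly_algebrable seq_algebra (UNIV :: real set) (ANM r - ND r)"
  unfolding strongly_algebrable_def
proof (intro exI[of _ "range generator"] conjI)
  show "range generator \<subseteq> seq_algebra"
    by (auto simp: seq_algebra_def generator_def const_off_null_def)
  show "range generator \<approx> (UNIV :: real set)"
    using inj_on_image_eqpoll_self[OF inj_generator] .
  show "alg_indep (range generator)"
    unfolding alg_indep_def
  proof (intro allI impI)
    fix n x E and c :: "(nat \<Rightarrow> nat) \<Rightarrow> real"
    assume "(\<forall>i<n. x i \<in> range generator) \<and> inj_on x {..<n} \<and> finite E \<and> E \<noteq> {} \<and>
      E \<subseteq> mono_exps n \<and> (\<forall>e\<in>E. c e \<noteq> 0)"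
    hence x: "\<forall>i<n. x i \<in> range generator" and "inj_on x {..<n}"
      and E: "finite E" "E \<noteq> {}" "E \<subseteq> mono_exps n" "\<forall>e\<in>E. c e \<noteq> 0"
      by auto
    have "inj_on (\<lambda>i. inv generator (x i)) {..<n}"
    proof (rule inj_onI)
      fix i j assume "i \<in> {..<n}" "j \<in> {..<n}" "inv generator (x i) = inv generator (x j)"
      hence "x i = x j" using x by (metis f_inv_into_f lessThan_iff)
      thus "i = j" using \<open>i \<in> {..<n}\<close> \<open>j \<in> {..<n}\<close> by (rule inj_onD[OF \<open>inj_on x {..<n}\<close>])
    qed
    thus "poly_eval E c n x \<noteq> (\<lambda>a t. 0)"
      unfolding poly_eval_range_generator[OF x] by (rule poly_eval_generator_nonzero[OF _ E])
  qed
  show "\<forall>y\<in>gen_alg (range generator). y \<noteq> (\<lambda>a t. 0) \<longrightarrow> y \<in> ANM r - ND r"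
  proof (intro ballI impI)
    fix y assume "y \<in> gen_alg (range generator)" and nz: "y \<noteq> (\<lambda>a t. 0)"
    then obtain n x E c where y: "y = poly_eval E c n x"
      and x: "\<forall>i<n. x i \<in> range generator" and E: "E \<subseteq> mono_exps n"
      unfolding gen_alg_def by blast
    show "y \<in> ANM r - ND r"
      using nz unfolding y poly_eval_range_generator[OF x]
      by (rule poly_eval_generator_in_ANM_minus_ND[OF E])
  qed
qed

end

theorem mainTheorem12:
  fixes r :: "'i rel"
  assumes "card_order r"
    and "card_is_addN (UNIV :: 'i set)"
    and "card_is_covN (UNIV :: 'i set)"
  shows "strongly_algebrable (seq_algebra :: ('i \<Rightarrow> real \<Rightarrow> real) set) (UNIV :: real set)
           (ANM r - ND r)"
proof -
  have "infinite (UNIV :: 'i set)" using card_is_addN_infinite[OF assms(2)] .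
  have "(UNIV :: (nat \<times> nat \<times> nat \<times> nat) set) \<lesssim> (UNIV :: nat set)"
    unfolding lepoll_def using inj_to_nat by blast
  also have "(UNIV :: nat set) \<lesssim> (UNIV :: 'i set)"
    using \<open>infinite UNIV\<close> infinite_le_lepoll by blast
  finally obtain \<phi> :: "'i \<Rightarrow> nat \<times> nat \<times> nat \<times> nat"
    where "\<And>q b. \<exists>a. (b, a) \<in> r \<and> a \<noteq> b \<and> \<phi> a = q"
    using card_order_cofinal_fibres[OF assms(1) \<open>infinite UNIV\<close>] by blast
  moreover obtain A :: "'i \<Rightarrow> real set" where "\<And>a. A a \<in> null_sets lebesgue"
    and "\<And>t. t \<in> {0..1} \<Longrightarrow> \<exists>b. \<forall>a. (b, a) \<in> r \<longrightarrow> t \<in> A a"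
    using addN_covN_null_exhaustion[OF assms] by blast
  ultimately interpret cofinal_null_exhaustion r \<phi> A
    by unfold_locales
  show ?thesis by (rule strongly_algebrable_ANM_minus_ND)
qed

end
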